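(* Let $n\ge1$ and $\mathbb{P}\in\mathcal{P}_n$. For every $T\in\mathbb{R}_{++}^{2\times n}$ there exists a sequence $(T_k)_{k\ge1}\subset\mathbb{R}_{++}^{2\times n}$, $T_k=(T_{k,ij})$, such that $\mathbf{P}_{\mathbf{z}\sim\mathbb{P}}[z_j=T_{k,1j}/T_{k,2j}]=0$ for all $j\in[n]$ and all $k$, and \[ R_n(\mathbb{P},T)=\lim_{k\to\infty}R_n(\mathbb{P},T_k). \]
   Context: Scheduling on two machines with $n$ tasks. A processing-time matrix is $T\in\mathbb{R}_{++}^{2\times n}$; an allocation is $X\in\{0,1\}^{2\times n}$ with $X_{1j}+X_{2j}=1$; makespan $M(X,T)=\max_{i\in\{1,2\}}\sum_jX_{ij}T_{ij}$; $M^*(T)=\min_XM(X,T)$. $\mathcal{P}_n$ is the set of Borel probability measures on $\mathbb{R}^n$ supported in $\mathbb{R}_{++}^n$. For $\mathbb{P}\in\mathcal{P}_n$, algorithm $\mathcal{A}^{\mathbb{P}}$ draws $\mathbf{z}\sim\mathbb{P}$ and sends task $j$ to machine 1 iff $T_{1j}/T_{2j}<z_j$ (else to machine 2); $M(\mathbb{P},T)$ is the expected makespan of this random allocation and $R_n(\mathbb{P},T)=M(\mathbb{P},T)/M^*(T)$. *)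

theory Defs
  imports "HOL-Probability.Probability"
begin

text \<open>Tasks are indexed by a finite type 'n (so n = CARD('n) \<ge> 1).
  Machines are indexed by the naturals 1 and 2.  A processing-time matrix is
  T :: nat \<Rightarrow> 'n \<Rightarrow> real, only rows 1 and 2 matter.\<close>

definition pos_matrix :: "(nat \<Rightarrow> 'n::finite \<Rightarrow> real) \<Rightarrow> bool" where
  "pos_matrix T \<longleftrightarrow> (\<forall>i\<in>{1,2}. \<forall>j. 0 < T i j)"

definition allocation :: "(nat \<Rightarrow> 'n::finite \<Rightarrow> real) \<Rightarrow> bool" where
  "allocation X \<longleftrightarrow> (\<forall>i\<in>{1,2}. \<forall>j. X i j \<in> {0,1}) \<and> (\<forall>j. X 1 j + X 2 j = 1)"

definition makespan :: "(nat \<Rightarrow> 'n::finite \<Rightarrow> real) \<Rightarrow> (nat \<Rightarrow> 'n \<Rightarrow> real) \<Rightarrow> real" where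
  "makespan X T = max (\<Sum>j\<in>UNIV. X 1 j * T 1 j) (\<Sum>j\<in>UNIV. X 2 j * T 2 j)"

definition opt_makespan :: "(nat \<Rightarrow> 'n::finite \<Rightarrow> real) \<Rightarrow> real" where
  "opt_makespan T = (INF X \<in> {X. allocation X}. makespan X T)"

definition prob_measures :: "(real^'n::finite) measure set" where
  "prob_measures = {P. prob_space P \<and> sets P = sets borel \<and> (AE z in P. \<forall>j. 0 < z $ j)}"

definition alg_alloc :: "real^'n::finite \<Rightarrow> (nat \<Rightarrow> 'n \<Rightarrow> real) \<Rightarrow> (nat \<Rightarrow> 'n \<Rightarrow> real)" where
  "alg_alloc z T = (\<lambda>i j. if i = 1 then (if T 1 j / T 2 j < z $ j then 1 else 0)
                         else if i = 2 then (if T 1 j / T 2 j < z $ j then 0 else 1)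
                         else 0)"

definition exp_makespan :: "(real^'n::finite) measure \<Rightarrow> (nat \<Rightarrow> 'n \<Rightarrow> real) \<Rightarrow> real" where
  "exp_makespan P T = (\<integral>z. makespan (alg_alloc z T) T \<partial>P)"

definition ratio :: "(real^'n::finite) measure \<Rightarrow> (nat \<Rightarrow> 'n \<Rightarrow> real) \<Rightarrow> real" where
  "ratio P T = exp_makespan P T / opt_makespan T"

end

theory Submission
  imports Defs
begin

text \<open>Push every ratio \<open>T\<^sub>1\<^sub>j / T\<^sub>2\<^sub>j\<close> slightly upwards onto a value that is not an atom of
  the law of \<open>z\<^sub>j\<close>; such values are dense because the atoms of a finite measure are
  countable. Since task \<open>j\<close> goes to machine 1 iff the ratio is strictly below \<open>z\<^sub>j\<close>,
  approaching the ratio from above leaves the random allocation eventually unchanged for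
  every \<open>z\<close>. The makespan of a fixed allocation and the optimal makespan are 1-Lipschitz in
  the entries of the matrix, so dominated convergence gives convergence of the expected
  makespan, and the optimum stays positive.\<close>

lemma countable_point_masses:
  fixes f :: "'a \<Rightarrow> real"
  assumes "finite_measure P" and f: "f \<in> borel_measurable P"
  shows "countable {c. measure P {x \<in> space P. f x = c} \<noteq> 0}"
proof -
  interpret D: finite_measure "distr P borel f"
    using finite_measure.finite_measure_distr[OF assms] .
  have "measure (distr P borel f) {c} = measure P {x \<in> space P. f x = c}" for c
    by (subst measure_distr[OF f]) (auto simp: vimage_def Int_def conj_commute)
  then show ?thesis
    using D.countable_support by simp
qed

lemma exists_between_not_in_countable:
  fixes a b :: real
  assumes "countable A" and "a < b"
  shows "\<exists>c. a < c \<and> c < b \<and> c \<notin> A"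
proof -
  have "\<not> {a<..<b} \<subseteq> A"
    using assms countable_subset uncountable_open_interval by blast
  then show ?thesis by auto
qed

lemma approach_from_above_avoiding:
  fixes r :: "'n \<Rightarrow> real"
  assumes "\<And>j. countable (A j)"
  shows "\<exists>c :: nat \<Rightarrow> 'n \<Rightarrow> real. (\<forall>k j. r j < c k j \<and> c k j \<notin> A j) \<and>
           (\<forall>j. (\<lambda>k. c k j) \<longlonglongrightarrow> r j)"
proof -
  have "\<forall>k j. \<exists>x. r j < x \<and> x < r j + 1 / real (Suc k) \<and> x \<notin> A j"
    using exists_between_not_in_countable[OF assms] by simp
  then obtain c where c: "\<And>k j. r j < c k j \<and> c k j < r j + 1 / real (Suc k) \<and> c k j \<notin> A j"
    by metis
  have "(\<lambda>k. c k j) \<longlonglongrightarrow> r j" for j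
  proof (rule tendsto_sandwich[where f = "\<lambda>k. r j" and h = "\<lambda>k. r j + 1 / real (Suc k)"])
    show "\<forall>\<^sub>F k in sequentially. r j \<le> c k j" "\<forall>\<^sub>F k in sequentially. c k j \<le> r j + 1 / real (Suc k)"
      using c by (simp_all add: less_imp_le)
    show "(\<lambda>k. r j + 1 / real (Suc k)) \<longlonglongrightarrow> r j"
      using tendsto_add[OF tendsto_const LIMSEQ_Suc[OF lim_1_over_n], of "r j"] by simp
  qed simp
  with c show ?thesis by blast
qed

lemma eventually_less_iff_of_tendsto_from_above:
  fixes c :: "nat \<Rightarrow> real"
  assumes "\<And>k. r < c k" and "c \<longlonglongrightarrow> r"
  shows "\<forall>\<^sub>F k in sequentially. c k < x \<longleftrightarrow> r < x"
proof (cases "r < x")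
  case True
  show ?thesis
    by (rule eventually_mono[OF order_tendstoD(2)[OF assms(2) True]]) (simp add: True)
next
  case False
  then show ?thesis
    using assms(1) by (auto intro: always_eventually dest: less_trans)
qed

lemma allocation_alg_alloc: "allocation (alg_alloc z T)"
  unfolding allocation_def alg_alloc_def by auto

lemma alg_alloc_cong:
  assumes "\<And>j. T 1 j / T 2 j < z $ j \<longleftrightarrow> T' 1 j / T' 2 j < z $ j"
  shows "alg_alloc z T = alg_alloc z T'"
  using assms unfolding alg_alloc_def by (auto simp: fun_eq_iff)

lemma borel_measurable_vec_nth[measurable]:
  "(\<lambda>z::real^'n::finite. z $ j) \<in> borel_measurable borel"
  by (intro borel_measurable_continuous_onI continuous_intros)

lemma measurable_makespan_alg_alloc:
  "(\<lambda>z. makespan (alg_alloc z T) T) \<in> borel_measurable (borel :: (real^'n::finite) measure)"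
  unfolding makespan_def alg_alloc_def by measurable

lemma pos_matrixD: "pos_matrix T \<Longrightarrow> i \<in> {1, 2} \<Longrightarrow> 0 < T i j"
  unfolding pos_matrix_def by blast

lemma allocation_row_cases:
  assumes "allocation X"
  obtains "X 1 j = 1" "X 2 j = 0" | "X 1 j = 0" "X 2 j = 1"
proof -
  have "X 1 j \<in> {0, 1}" "X 1 j + X 2 j = 1"
    using assms unfolding allocation_def by simp_all
  then show ?thesis using that by auto
qed

lemma allocation_entry:
  assumes "allocation X" and "i \<in> {1, 2}"
  shows "X i j = 0 \<or> X i j = 1"
  using assms by (cases rule: allocation_row_cases[OF assms(1), of j]) auto

lemma allocated_time_nonneg:
  assumes "pos_matrix T" and "allocation X" and "i \<in> {1, 2}"
  shows "0 \<le> X i j * T i j"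
  using allocation_entry[OF assms(2,3), of j] pos_matrixD[OF assms(1,3), of j] by auto

lemma makespan_nonneg:
  assumes "pos_matrix T" and "allocation X"
  shows "0 \<le> makespan X T"
  unfolding makespan_def
  using allocated_time_nonneg[OF assms] by (simp add: sum_nonneg le_max_iff_disj)

lemma makespan_ge_min_entry:
  assumes "pos_matrix T" and "allocation X"
  shows "min (T 1 j) (T 2 j) \<le> makespan X T"
proof -
  have "X i j * T i j \<le> (\<Sum>j\<in>UNIV. X i j * T i j)" if "i \<in> {1, 2}" for i
    using allocated_time_nonneg[OF assms that] by (intro member_le_sum) auto
  then have "X 1 j * T 1 j \<le> makespan X T" "X 2 j * T 2 j \<le> makespan X T"
    unfolding makespan_def by (simp_all add: le_max_iff_disj)
  then show ?thesis
    by (cases rule: allocation_row_cases[OF assms(2), of j]) (simp_all add: min_le_iff_disj)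
qed

lemma makespan_le_total:
  assumes "pos_matrix T" and "allocation X"
  shows "makespan X T \<le> (\<Sum>j\<in>UNIV. T 1 j + T 2 j)"
proof -
  have "X i j * T i j \<le> T 1 j + T 2 j" if "i \<in> {1, 2}" for i j
    using allocation_entry[OF assms(2) that, of j] pos_matrixD[OF assms(1), of 1 j]
      pos_matrixD[OF assms(1), of 2 j] that
    by auto
  then show ?thesis
    unfolding makespan_def by (intro max.boundedI sum_mono) auto
qed

definition matrix_dist :: "(nat \<Rightarrow> 'n::finite \<Rightarrow> real) \<Rightarrow> (nat \<Rightarrow> 'n \<Rightarrow> real) \<Rightarrow> real" where
  "matrix_dist T T' = (\<Sum>j\<in>UNIV. \<bar>T 1 j - T' 1 j\<bar> + \<bar>T 2 j - T' 2 j\<bar>)"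

lemma matrix_dist_commute: "matrix_dist T T' = matrix_dist T' T"
  unfolding matrix_dist_def by (simp add: abs_minus_commute)

lemma tendsto_matrix_dist_zero:
  assumes "\<And>i j. (\<lambda>k. Ts k i j) \<longlonglongrightarrow> T i j"
  shows "(\<lambda>k. matrix_dist (Ts k) T) \<longlonglongrightarrow> 0"
proof -
  have "(\<lambda>k. matrix_dist (Ts k) T) \<longlonglongrightarrow> matrix_dist T T"
    unfolding matrix_dist_def by (intro tendsto_intros assms)
  then show ?thesis by (simp add: matrix_dist_def)
qed

lemma abs_max_diff_le: "\<bar>max a b - max c d\<bar> \<le> \<bar>a - c\<bar> + \<bar>b - d\<bar>" for a b c d :: real
  by (cases "a \<le> b"; cases "c \<le> d") (simp_all add: max_def abs_if)

lemma makespan_lipschitz: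
  assumes "allocation X"
  shows "\<bar>makespan X T - makespan X T'\<bar> \<le> matrix_dist T T'"
proof -
  have row: "\<bar>(\<Sum>j\<in>UNIV. X i j * T i j) - (\<Sum>j\<in>UNIV. X i j * T' i j)\<bar>
      \<le> (\<Sum>j\<in>UNIV. \<bar>T i j - T' i j\<bar>)" if "i \<in> {1, 2}" for i
  proof -
    have "\<bar>(\<Sum>j\<in>UNIV. X i j * T i j) - (\<Sum>j\<in>UNIV. X i j * T' i j)\<bar>
        \<le> (\<Sum>j\<in>UNIV. \<bar>X i j * T i j - X i j * T' i j\<bar>)"
      unfolding sum_subtractf[symmetric] by (rule sum_abs)
    also have "\<dots> \<le> (\<Sum>j\<in>UNIV. \<bar>T i j - T' i j\<bar>)"
    proof (rule sum_mono)
      fix j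
      show "\<bar>X i j * T i j - X i j * T' i j\<bar> \<le> \<bar>T i j - T' i j\<bar>"
        using allocation_entry[OF assms that, of j] by auto
    qed
    finally show ?thesis .
  qed
  have "matrix_dist T T' = (\<Sum>j\<in>UNIV. \<bar>T 1 j - T' 1 j\<bar>) + (\<Sum>j\<in>UNIV. \<bar>T 2 j - T' 2 j\<bar>)"
    unfolding matrix_dist_def by (simp add: sum.distrib)
  then show ?thesis
    unfolding makespan_def
    using abs_max_diff_le[of "\<Sum>j\<in>UNIV. X 1 j * T 1 j" "\<Sum>j\<in>UNIV. X 2 j * T 2 j"
        "\<Sum>j\<in>UNIV. X 1 j * T' 1 j" "\<Sum>j\<in>UNIV. X 2 j * T' 2 j"] row[of 1] row[of 2]
    by simp
qed

lemma allocations_nonempty: "{X. allocation X} \<noteq> {}"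
proof -
  have "allocation (\<lambda>i j. if i = 1 then 1 else 0)"
    unfolding allocation_def by auto
  then show ?thesis by blast
qed

lemma opt_makespan_le:
  assumes "pos_matrix T" and "allocation X"
  shows "opt_makespan T \<le> makespan X T"
  unfolding opt_makespan_def
  using assms by (intro cINF_lower bdd_belowI2[where m = 0]) (auto intro: makespan_nonneg)

lemma opt_makespan_pos:
  assumes "pos_matrix T"
  shows "0 < opt_makespan T"
proof -
  fix j
  have "min (T 1 j) (T 2 j) \<le> opt_makespan T"
    unfolding opt_makespan_def
    using assms by (intro cINF_greatest allocations_nonempty makespan_ge_min_entry) auto
  moreover have "0 < min (T 1 j) (T 2 j)"
    using assms unfolding pos_matrix_def by simp
  ultimately show ?thesis by linarith
qed

lemma opt_makespan_lipschitz:
  fixes T T' :: "nat \<Rightarrow> 'n::finite \<Rightarrow> real"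
  assumes "pos_matrix T"
  shows "opt_makespan T - matrix_dist T T' \<le> opt_makespan T'"
  unfolding opt_makespan_def[of T']
proof (rule cINF_greatest[OF allocations_nonempty])
  fix X :: "nat \<Rightarrow> 'n \<Rightarrow> real" assume "X \<in> {X. allocation X}"
  then show "opt_makespan T - matrix_dist T T' \<le> makespan X T'"
    using opt_makespan_le[OF assms] makespan_lipschitz[of X T T'] by fastforce
qed

lemma tendsto_opt_makespan:
  assumes "pos_matrix T" and "\<And>k. pos_matrix (Ts k)" and "\<And>i j. (\<lambda>k. Ts k i j) \<longlonglongrightarrow> T i j"
  shows "(\<lambda>k. opt_makespan (Ts k)) \<longlonglongrightarrow> opt_makespan T"
proof (rule tendsto_sandwich)
  have "(\<lambda>k. matrix_dist (Ts k) T) \<longlonglongrightarrow> 0"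
    by (rule tendsto_matrix_dist_zero[OF assms(3)])
  from tendsto_diff[OF tendsto_const this] tendsto_add[OF tendsto_const this]
  show "(\<lambda>k. opt_makespan T - matrix_dist (Ts k) T) \<longlonglongrightarrow> opt_makespan T"
    "(\<lambda>k. opt_makespan T + matrix_dist (Ts k) T) \<longlonglongrightarrow> opt_makespan T"
    by simp_all
  show "\<forall>\<^sub>F k in sequentially. opt_makespan T - matrix_dist (Ts k) T \<le> opt_makespan (Ts k)"
    using opt_makespan_lipschitz[OF assms(1)] by (simp add: matrix_dist_commute[of T])
  show "\<forall>\<^sub>F k in sequentially. opt_makespan (Ts k) \<le> opt_makespan T + matrix_dist (Ts k) T"
    using opt_makespan_lipschitz[OF assms(2)] by (simp add: algebra_simps)
qed

lemma tendsto_exp_makespan: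
  fixes P :: "(real^'n::finite) measure"
  assumes "P \<in> prob_measures" and "pos_matrix T" and "\<And>k. pos_matrix (Ts k)"
    and lim: "\<And>i j. (\<lambda>k. Ts k i j) \<longlonglongrightarrow> T i j"
    and alloc: "AE z in P. \<forall>\<^sub>F k in sequentially. alg_alloc z (Ts k) = alg_alloc z T"
  shows "(\<lambda>k. exp_makespan P (Ts k)) \<longlonglongrightarrow> exp_makespan P T"
proof -
  interpret prob_space P
    using assms(1) by (simp add: prob_measures_def)
  have "sets P = sets borel"
    using assms(1) by (simp add: prob_measures_def)
  then have meas: "(\<lambda>z. makespan (alg_alloc z T') T') \<in> borel_measurable P" for T'
    using measurable_cong_sets measurable_makespan_alg_alloc by blast
  obtain K where K: "\<forall>k. norm (matrix_dist (Ts k) T) \<le> K"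
    using convergent_imp_Bseq[OF convergentI[OF tendsto_matrix_dist_zero[of Ts T, OF lim]]]
    by (rule BseqE) blast
  define B where "B = (\<Sum>j\<in>UNIV. T 1 j + T 2 j) + K"
  have bound: "norm (makespan (alg_alloc z (Ts k)) (Ts k)) \<le> B" for z k
  proof -
    let ?X = "alg_alloc z (Ts k)"
    have "0 \<le> makespan ?X (Ts k)"
      by (rule makespan_nonneg[OF assms(3) allocation_alg_alloc])
    moreover have "makespan ?X (Ts k) \<le> makespan ?X T + matrix_dist (Ts k) T"
      using makespan_lipschitz[OF allocation_alg_alloc, of z "Ts k" "Ts k" T] by linarith
    moreover have "makespan ?X T \<le> (\<Sum>j\<in>UNIV. T 1 j + T 2 j)"
      by (rule makespan_le_total[OF assms(2) allocation_alg_alloc])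
    moreover have "matrix_dist (Ts k) T \<le> K"
      using spec[OF K, of k] by simp
    ultimately show ?thesis
      unfolding B_def by simp
  qed
  have pointwise: "(\<lambda>k. makespan (alg_alloc z (Ts k)) (Ts k)) \<longlonglongrightarrow> makespan (alg_alloc z T) T"
    if "\<forall>\<^sub>F k in sequentially. alg_alloc z (Ts k) = alg_alloc z T" for z
  proof -
    have "(\<lambda>k. makespan (alg_alloc z T) (Ts k)) \<longlonglongrightarrow> makespan (alg_alloc z T) T"
      unfolding makespan_def by (intro tendsto_intros lim)
    moreover have "\<forall>\<^sub>F k in sequentially.
        makespan (alg_alloc z T) (Ts k) = makespan (alg_alloc z (Ts k)) (Ts k)"
      using that by (rule eventually_mono) simp
    ultimately show ?thesis by (rule Lim_transform_eventually)
  qed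
  show ?thesis
    unfolding exp_makespan_def
  proof (rule integral_dominated_convergence[where w = "\<lambda>z. B"])
    show "AE z in P. (\<lambda>k. makespan (alg_alloc z (Ts k)) (Ts k)) \<longlonglongrightarrow> makespan (alg_alloc z T) T"
      using alloc by (rule eventually_mono) (rule pointwise)
  qed (use meas bound in simp_all)
qed

lemma tendsto_ratio:
  fixes P :: "(real^'n::finite) measure"
  assumes "P \<in> prob_measures" and "pos_matrix T" and "\<And>k. pos_matrix (Ts k)"
    and "\<And>i j. (\<lambda>k. Ts k i j) \<longlonglongrightarrow> T i j"
    and "AE z in P. \<forall>\<^sub>F k in sequentially. alg_alloc z (Ts k) = alg_alloc z T"
  shows "(\<lambda>k. ratio P (Ts k)) \<longlonglongrightarrow> ratio P T"
  unfolding ratio_def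
  using tendsto_exp_makespan[OF assms] tendsto_opt_makespan[OF assms(2-4)] opt_makespan_pos[OF assms(2)]
  by (intro tendsto_divide) auto

definition with_ratios :: "(nat \<Rightarrow> 'n \<Rightarrow> real) \<Rightarrow> ('n \<Rightarrow> real) \<Rightarrow> nat \<Rightarrow> 'n \<Rightarrow> real" where
  "with_ratios T c = (\<lambda>i j. if i = 1 then T 2 j * c j else T i j)"

lemma with_ratios_ratio:
  assumes "pos_matrix T"
  shows "with_ratios T c 1 j / with_ratios T c 2 j = c j"
  using pos_matrixD[OF assms, of 2 j] unfolding with_ratios_def by simp

lemma pos_matrix_with_ratios:
  assumes "pos_matrix T" and "\<And>j. 0 < c j"
  shows "pos_matrix (with_ratios T c)"
  using assms unfolding pos_matrix_def with_ratios_def by simp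

lemma tendsto_with_ratios:
  assumes "\<And>j. (\<lambda>k. c k j) \<longlonglongrightarrow> d j"
  shows "(\<lambda>k. with_ratios T (c k) i j) \<longlonglongrightarrow> with_ratios T d i j"
  unfolding with_ratios_def by (cases "i = 1") (simp_all add: tendsto_mult_left assms)

lemma with_ratios_self:
  assumes "pos_matrix T"
  shows "with_ratios T (\<lambda>j. T 1 j / T 2 j) = T"
proof -
  have "T 2 j \<noteq> 0" for j
    using pos_matrixD[OF assms, of 2 j] by simp
  then show ?thesis
    unfolding with_ratios_def by (simp add: fun_eq_iff)
qed

lemma ratio_pos:
  assumes "pos_matrix T"
  shows "0 < T 1 j / T 2 j"
  using pos_matrixD[OF assms, of 1 j] pos_matrixD[OF assms, of 2 j] by simp

lemma tendsto_ratio_with_ratios_from_above: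
  fixes P :: "(real^'n::finite) measure"
  assumes "P \<in> prob_measures" and "pos_matrix T"
    and above: "\<And>k j. T 1 j / T 2 j < c k j" and lim: "\<And>j. (\<lambda>k. c k j) \<longlonglongrightarrow> T 1 j / T 2 j"
  shows "(\<lambda>k. ratio P (with_ratios T (c k))) \<longlonglongrightarrow> ratio P T"
proof (rule tendsto_ratio[OF assms(1,2)])
  show "pos_matrix (with_ratios T (c k))" for k
    using ratio_pos[OF assms(2)] above by (intro pos_matrix_with_ratios[OF assms(2)]) (meson less_trans)
  show "(\<lambda>k. with_ratios T (c k) i j) \<longlonglongrightarrow> T i j" for i j
    using tendsto_with_ratios[where T = T and d = "\<lambda>j. T 1 j / T 2 j", OF lim]
    unfolding with_ratios_self[OF assms(2)] .
  show "AE z in P. \<forall>\<^sub>F k in sequentially. alg_alloc z (with_ratios T (c k)) = alg_alloc z T"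
  proof (rule AE_I2)
    fix z :: "real^'n"
    have "\<forall>\<^sub>F k in sequentially. \<forall>j. c k j < z $ j \<longleftrightarrow> T 1 j / T 2 j < z $ j"
      using above by (intro eventually_all_finite eventually_less_iff_of_tendsto_from_above lim)
    then show "\<forall>\<^sub>F k in sequentially. alg_alloc z (with_ratios T (c k)) = alg_alloc z T"
      by (rule eventually_mono) (intro alg_alloc_cong, unfold with_ratios_ratio[OF assms(2)], simp)
  qed
qed

theorem lemma2:
  fixes P :: "(real^'n::finite) measure" and T :: "nat \<Rightarrow> 'n \<Rightarrow> real"
  assumes "P \<in> prob_measures" and "pos_matrix T"
  shows "\<exists>Ts :: nat \<Rightarrow> nat \<Rightarrow> 'n \<Rightarrow> real.
           (\<forall>k. pos_matrix (Ts k)) \<and>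
           (\<forall>k j. measure P {z. z $ j = Ts k 1 j / Ts k 2 j} = 0) \<and>
           (\<lambda>k. ratio P (Ts k)) \<longlonglongrightarrow> ratio P T"
proof -
  have P: "prob_space P" "sets P = sets borel"
    using assms(1) by (simp_all add: prob_measures_def)
  have "countable {c. measure P {z. z $ j = c} \<noteq> 0}" for j
    using countable_point_masses[OF prob_space.finite_measure[OF P(1)], of "\<lambda>z. z $ j"]
    by (simp add: measurable_cong_sets[OF P(2) refl] sets_eq_imp_space_eq[OF P(2)])
  then obtain c where above: "\<And>k j. T 1 j / T 2 j < c k j"
    and no_atom: "\<And>k j. measure P {z. z $ j = c k j} = 0"
    and lim: "\<And>j. (\<lambda>k. c k j) \<longlonglongrightarrow> T 1 j / T 2 j"
    using approach_from_above_avoiding[where A = "\<lambda>j. {c. measure P {z. z $ j = c} \<noteq> 0}"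
        and r = "\<lambda>j. T 1 j / T 2 j"]
    by auto
  show ?thesis
  proof (intro exI conjI allI)
    show "pos_matrix (with_ratios T (c k))" for k
      using ratio_pos[OF assms(2)] above by (intro pos_matrix_with_ratios[OF assms(2)]) (meson less_trans)
    show "measure P {z. z $ j = with_ratios T (c k) 1 j / with_ratios T (c k) 2 j} = 0" for k j
      unfolding with_ratios_ratio[OF assms(2)] by (rule no_atom)
    show "(\<lambda>k. ratio P (with_ratios T (c k))) \<longlonglongrightarrow> ratio P T"
      by (rule tendsto_ratio_with_ratios_from_above[OF assms above lim])
  qed
qed

end
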